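(* Let $\kappa_3,\kappa_4,q$ be constants and let $y$ be a $C^3$ function on an open interval of $r>0$ on which $\kappa_3r^2+\kappa_4\neq0$. Then $y$ satisfies the third-order equation $$(\kappa_3r^2+\kappa_4)r^3y'''+(\kappa_3r^2-2\kappa_4)r^2y''-(\kappa_3r^2+2\kappa_4)ry'+8\kappa_4y=8-\frac{24q^2}{r^2}$$ if and only if there exists a constant $\kappa_2$ such that $y$ satisfies the second-order equation $$(\kappa_3r^2+\kappa_4)y''+\kappa_3ry'-\frac{2\kappa_4}{r^2}y+\frac{2}{r^2}=2\kappa_2r^2+\frac{4q^2}{r^4}.$$
   Context: Primes denote derivatives with respect to $r$. (In the paper, $y=b^2$ is the metric function of a static spherically symmetric solution of conformal Killing gravity coupled to linear electrodynamics with total charge $q$, $q^2=q_e^2+q_m^2$.) *)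

theory Defs
  imports "HOL-Analysis.Analysis"
begin

end

theory Submission
  imports Defs
begin

text \<open>Dividing the second-order equation by \<open>r\<^sup>2\<close> isolates the constant:
  \<open>F r = 2 \<kappa>\<^sub>2\<close> with \<open>F\<close> the first integral below.
  Its derivative is the residual of the third-order equation divided by \<open>r\<^sup>5\<close>,
  so the third-order equation holds on the interval exactly when \<open>F\<close> is constant there.\<close>

definition first_integral ::
    "real \<Rightarrow> real \<Rightarrow> real \<Rightarrow> (real \<Rightarrow> real) \<Rightarrow> (real \<Rightarrow> real) \<Rightarrow> (real \<Rightarrow> real) \<Rightarrow> real \<Rightarrow> real"
  where "first_integral k3 k4 q y y1 y2 r =
    ((k3 * r^2 + k4) * y2 r + k3 * r * y1 r - 2 * k4 / r^2 * y r + 2 / r^2 - 4 * q^2 / r^4) / r^2"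

definition third_order_residual ::
    "real \<Rightarrow> real \<Rightarrow> real \<Rightarrow> (real \<Rightarrow> real) \<Rightarrow> (real \<Rightarrow> real) \<Rightarrow> (real \<Rightarrow> real) \<Rightarrow> (real \<Rightarrow> real)
      \<Rightarrow> real \<Rightarrow> real"
  where "third_order_residual k3 k4 q y y1 y2 y3 r =
    (k3 * r^2 + k4) * r^3 * y3 r + (k3 * r^2 - 2 * k4) * r^2 * y2 r
      - (k3 * r^2 + 2 * k4) * r * y1 r + 8 * k4 * y r - (8 - 24 * q^2 / r^2)"

lemma has_real_derivative_first_integral:
  fixes y y1 y2 y3 :: "real \<Rightarrow> real" and k3 k4 q r :: real
  assumes r: "r \<noteq> 0"
    and "(y has_real_derivative y1 r) (at r)"
    and "(y1 has_real_derivative y2 r) (at r)"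
    and "(y2 has_real_derivative y3 r) (at r)"
  shows "(first_integral k3 k4 q y y1 y2 has_real_derivative
     third_order_residual k3 k4 q y y1 y2 y3 r / r^5) (at r)"
  unfolding first_integral_def[abs_def] using assms
  by (auto intro!: derivative_eq_intros simp: power2_eq_square power4_eq_xxxx simp del: power_Suc)
    (simp add: third_order_residual_def field_simps power2_eq_square power3_eq_cube, algebra)

lemma second_order_eq_iff_first_integral:
  fixes y y1 y2 :: "real \<Rightarrow> real" and k2 k3 k4 q r :: real
  assumes "r \<noteq> 0"
  shows "(k3 * r^2 + k4) * y2 r + k3 * r * y1 r - 2 * k4 / r^2 * y r + 2 / r^2
           = 2 * k2 * r^2 + 4 * q^2 / r^4
         \<longleftrightarrow> first_integral k3 k4 q y y1 y2 r = 2 * k2"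
  using assms by (auto simp: first_integral_def field_simps)

lemma derivative_zero_iff_constant_on_open_interval:
  fixes F F' :: "real \<Rightarrow> real" and I :: "real set"
  assumes "open I" and "is_interval I"
    and F': "\<And>x. x \<in> I \<Longrightarrow> (F has_real_derivative F' x) (at x)"
  shows "(\<forall>x\<in>I. F' x = 0) \<longleftrightarrow> (\<exists>c. \<forall>x\<in>I. F x = c)"
proof
  assume "\<forall>x\<in>I. F' x = 0"
  then show "\<exists>c. \<forall>x\<in>I. F x = c"
    using \<open>is_interval I\<close> F'
    by (intro has_field_derivative_zero_constant)
      (auto simp: is_interval_convex intro: has_field_derivative_at_within)
next
  assume "\<exists>c. \<forall>x\<in>I. F x = c"
  then obtain c where c: "\<forall>x\<in>I. F x = c" ..
  show "\<forall>x\<in>I. F' x = 0"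
  proof
    fix x assume x: "x \<in> I"
    have "(F has_real_derivative 0) (at x)"
      by (rule has_field_derivative_transform_within_open[of "\<lambda>_. c" _ _ I])
        (use x c \<open>open I\<close> in auto)
    with F'[OF x] show "F' x = 0" by (rule DERIV_unique)
  qed
qed

theorem proposition12:
  fixes y y1 y2 y3 :: "real \<Rightarrow> real" and I :: "real set" and k3 k4 q :: real
  assumes I_open: "open I" and I_interval: "is_interval I" and I_ne: "I \<noteq> {}"
    and I_pos: "I \<subseteq> {0<..}"
    and I_nz: "\<forall>r\<in>I. k3 * r^2 + k4 \<noteq> 0"
    and d1: "\<forall>r\<in>I. (y has_real_derivative y1 r) (at r)"
    and d2: "\<forall>r\<in>I. (y1 has_real_derivative y2 r) (at r)"
    and d3: "\<forall>r\<in>I. (y2 has_real_derivative y3 r) (at r)"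
    and c3: "continuous_on I y3"
  shows "(\<forall>r\<in>I. (k3 * r^2 + k4) * r^3 * y3 r + (k3 * r^2 - 2 * k4) * r^2 * y2 r
                  - (k3 * r^2 + 2 * k4) * r * y1 r + 8 * k4 * y r = 8 - 24 * q^2 / r^2)
     \<longleftrightarrow> (\<exists>k2. \<forall>r\<in>I. (k3 * r^2 + k4) * y2 r + k3 * r * y1 r - 2 * k4 / r^2 * y r + 2 / r^2
                  = 2 * k2 * r^2 + 4 * q^2 / r^4)"
proof -
  have r_nz: "r \<noteq> 0" if "r \<in> I" for r
    using that I_pos by auto
  have "(\<forall>r\<in>I. (k3 * r^2 + k4) * r^3 * y3 r + (k3 * r^2 - 2 * k4) * r^2 * y2 r
                  - (k3 * r^2 + 2 * k4) * r * y1 r + 8 * k4 * y r = 8 - 24 * q^2 / r^2)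
      \<longleftrightarrow> (\<forall>r\<in>I. third_order_residual k3 k4 q y y1 y2 y3 r / r^5 = 0)"
    using r_nz by (simp add: third_order_residual_def)
  also have "\<dots> \<longleftrightarrow> (\<exists>c. \<forall>r\<in>I. first_integral k3 k4 q y y1 y2 r = c)"
    using d1 d2 d3 r_nz
    by (intro derivative_zero_iff_constant_on_open_interval I_open I_interval
        has_real_derivative_first_integral) auto
  also have "\<dots> \<longleftrightarrow> (\<exists>k2. \<forall>r\<in>I. first_integral k3 k4 q y y1 y2 r = 2 * k2)"
    by (metis field_sum_of_halves mult_2)
  also have "\<dots> \<longleftrightarrow> (\<exists>k2. \<forall>r\<in>I. (k3 * r^2 + k4) * y2 r + k3 * r * y1 r - 2 * k4 / r^2 * y r
                  + 2 / r^2 = 2 * k2 * r^2 + 4 * q^2 / r^4)"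
    using second_order_eq_iff_first_integral[OF r_nz] by auto
  finally show ?thesis .
qed

end
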